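(* For every integer $n\ge0$, the real vector space $\operatorname{Infr}_n$ of inframonogenic homogeneous polynomials of degree $n$ has dimension $6n+3$ over $\mathbb{R}$.
   Context: $\mathbb{H}$ denotes the real quaternions with basis $e_0=1,e_1,e_2,e_3$ and $e_1^2=e_2^2=e_3^2=e_1e_2e_3=-1$; $\mathbb{R}^3$ is identified with the reduced quaternions $x_0+x_1e_1+x_2e_2$. $\operatorname{Infr}_n$ is the set of functions $f=f_0+f_1e_1+f_2e_2$ where each $f_i$ is a real homogeneous polynomial of degree $n$ in $x_0,x_1,x_2$, such that $\overline{\partial} f\overline{\partial}=0$. Here, with $\partial_i=\partial/\partial x_i$, $\overline{\partial} g=\partial_0 g+e_1\partial_1 g+e_2\partial_2 g$ (left action), $g\overline{\partial}=\partial_0 g+(\partial_1 g)e_1+(\partial_2 g)e_2$ (right action), and $\overline{\partial} f\overline{\partial}:=\overline{\partial}(f\overline{\partial})$. *)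

theory Defs
  imports "HOL-Analysis.Analysis" "HOL-Library.Function_Algebras"
begin

text \<open>Real quaternions q0 + q1 e1 + q2 e2 + q3 e3 with the Hamilton product
  (e1^2 = e2^2 = e3^2 = e1 e2 e3 = -1).\<close>
datatype quat = Q (q0: real) (q1: real) (q2: real) (q3: real)

definition qadd :: "quat \<Rightarrow> quat \<Rightarrow> quat" where
  "qadd a b = Q (q0 a + q0 b) (q1 a + q1 b) (q2 a + q2 b) (q3 a + q3 b)"

definition qscale :: "real \<Rightarrow> quat \<Rightarrow> quat" where
  "qscale r a = Q (r * q0 a) (r * q1 a) (r * q2 a) (r * q3 a)"

definition qmul :: "quat \<Rightarrow> quat \<Rightarrow> quat" where
  "qmul a b = Q
     (q0 a * q0 b - q1 a * q1 b - q2 a * q2 b - q3 a * q3 b)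
     (q0 a * q1 b + q1 a * q0 b + q2 a * q3 b - q3 a * q2 b)
     (q0 a * q2 b - q1 a * q3 b + q2 a * q0 b + q3 a * q1 b)
     (q0 a * q3 b + q1 a * q2 b - q2 a * q1 b + q3 a * q0 b)"

definition qe1 :: quat where "qe1 = Q 0 1 0 0"
definition qe2 :: quat where "qe2 = Q 0 0 1 0"

type_synonym pt = "real \<times> real \<times> real"

definition qderiv :: "(real \<Rightarrow> quat) \<Rightarrow> real \<Rightarrow> quat" where
  "qderiv g t = Q (deriv (\<lambda>s. q0 (g s)) t) (deriv (\<lambda>s. q1 (g s)) t)
                  (deriv (\<lambda>s. q2 (g s)) t) (deriv (\<lambda>s. q3 (g s)) t)"

definition pd0 :: "(pt \<Rightarrow> quat) \<Rightarrow> pt \<Rightarrow> quat" where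
  "pd0 g x = (case x of (a, b, c) \<Rightarrow> qderiv (\<lambda>t. g (t, b, c)) a)"
definition pd1 :: "(pt \<Rightarrow> quat) \<Rightarrow> pt \<Rightarrow> quat" where
  "pd1 g x = (case x of (a, b, c) \<Rightarrow> qderiv (\<lambda>t. g (a, t, c)) b)"
definition pd2 :: "(pt \<Rightarrow> quat) \<Rightarrow> pt \<Rightarrow> quat" where
  "pd2 g x = (case x of (a, b, c) \<Rightarrow> qderiv (\<lambda>t. g (a, b, t)) c)"

definition dbar_left :: "(pt \<Rightarrow> quat) \<Rightarrow> pt \<Rightarrow> quat" where
  "dbar_left g x = qadd (pd0 g x) (qadd (qmul qe1 (pd1 g x)) (qmul qe2 (pd2 g x)))"

definition dbar_right :: "(pt \<Rightarrow> quat) \<Rightarrow> pt \<Rightarrow> quat" where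
  "dbar_right g x = qadd (pd0 g x) (qadd (qmul (pd1 g x) qe1) (qmul (pd2 g x) qe2))"

definition hom_poly :: "nat \<Rightarrow> (pt \<Rightarrow> real) \<Rightarrow> bool" where
  "hom_poly n p \<longleftrightarrow> (\<exists>c :: nat \<Rightarrow> nat \<Rightarrow> real. \<forall>a b d.
      p (a, b, d) = (\<Sum>i\<le>n. \<Sum>j\<le>n - i. c i j * a ^ i * b ^ j * d ^ (n - i - j)))"

text \<open>Infr_n: reduced-quaternion-valued f = f0 + f1 e1 + f2 e2 with each f_i a
  homogeneous polynomial of degree n, such that dbar (f dbar) = 0.\<close>
definition Infr :: "nat \<Rightarrow> (pt \<Rightarrow> quat) set" where
  "Infr n = {f. (\<forall>x. q3 (f x) = 0)
              \<and> hom_poly n (\<lambda>x. q0 (f x)) \<and> hom_poly n (\<lambda>x. q1 (f x))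
              \<and> hom_poly n (\<lambda>x. q2 (f x))
              \<and> (\<forall>x. dbar_left (dbar_right f) x = Q 0 0 0 0)}"

definition fscale :: "real \<Rightarrow> (pt \<Rightarrow> quat) \<Rightarrow> (pt \<Rightarrow> quat)" where
  "fscale r f = (\<lambda>x. qscale r (f x))"

instantiation quat :: ab_group_add
begin
definition "0 = Q 0 0 0 0"
definition "a + b = qadd a b"
definition "- a = Q (- q0 a) (- q1 a) (- q2 a) (- q3 a)"
definition "a - b = qadd a (- b)" for a b :: quat
instance
  by standard (auto simp: zero_quat_def plus_quat_def uminus_quat_def minus_quat_def qadd_def)
end

end

theory Submission
  imports Defs
begin

text \<open>
  Expand each component of f in monomials x0^i x1^j x2^l. Since
  dbar (f dbar) = d0^2 f + (terms with at most one d0), comparing coefficients turns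
  dbar f dbar = 0 into a recursion that expresses the x0^(i+2)-layer of the coefficients
  through the x0^i- and x0^(i+1)-layers; the e3-component of dbar (f dbar) vanishes
  identically when f is reduced. Hence a solution is determined by its Cauchy data, the
  layers x0^0 and x0^1, and conversely the recursion extends any Cauchy data to a
  solution. For f homogeneous of degree n the Cauchy data are reduced-quaternion-valued
  homogeneous polynomials in x1, x2 of degrees n and n - 1, a space of dimension
  3 (n + 1) + 3 n = 6 n + 3, and extending its monomial basis gives a basis of Infr_n.
\<close>

lemma deriv_power_sum:
  fixes C :: "nat \<Rightarrow> real"
  assumes "C N = 0"
  shows "deriv (\<lambda>t. \<Sum>i<N. C i * t ^ i) a = (\<Sum>i<N. real (Suc i) * C (Suc i) * a ^ i)"
proof -
  have "((\<lambda>t. \<Sum>i<N. C i * t ^ i) has_real_derivative (\<Sum>i<N. real i * C i * a ^ (i - 1))) (at a)"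
    by (auto intro!: derivative_eq_intros simp: mult_ac)
  then have "deriv (\<lambda>t. \<Sum>i<N. C i * t ^ i) a = (\<Sum>i<Suc N. real i * C i * a ^ (i - 1))"
    using assms by (simp add: DERIV_imp_deriv)
  also have "\<dots> = (\<Sum>i<N. real (Suc i) * C (Suc i) * a ^ i)"
    by (subst sum.lessThan_Suc_shift) simp
  finally show ?thesis .
qed

lemma power_sum_eq_0_imp_coeff_eq_0:
  fixes C :: "nat \<Rightarrow> real"
  assumes "\<And>t. (\<Sum>i<N. C i * t ^ i) = 0" and "i < N"
  shows "C i = 0"
proof (cases N)
  case (Suc M)
  have "\<forall>t. (\<Sum>i\<le>M. C i * t ^ i) = 0" using assms(1) by (simp add: Suc lessThan_Suc_atMost)
  then show ?thesis using polyfun_eq_0[of C M] assms(2) Suc by simp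
qed (use assms(2) in simp)

type_synonym coeffs3 = "nat \<Rightarrow> nat \<Rightarrow> nat \<Rightarrow> real"

definition poly3 :: "nat \<Rightarrow> coeffs3 \<Rightarrow> real \<Rightarrow> real \<Rightarrow> real \<Rightarrow> real" where
  "poly3 N c a b d = (\<Sum>i<N. \<Sum>j<N. \<Sum>l<N. c i j l * a ^ i * b ^ j * d ^ l)"

definition coeffs_below :: "nat \<Rightarrow> coeffs3 \<Rightarrow> bool" where
  "coeffs_below N c \<longleftrightarrow> (\<forall>i j l. N \<le> i \<or> N \<le> j \<or> N \<le> l \<longrightarrow> c i j l = 0)"

definition coeff_pd0 :: "coeffs3 \<Rightarrow> coeffs3" where
  "coeff_pd0 c i j l = real (Suc i) * c (Suc i) j l"
definition coeff_pd1 :: "coeffs3 \<Rightarrow> coeffs3" where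
  "coeff_pd1 c i j l = real (Suc j) * c i (Suc j) l"
definition coeff_pd2 :: "coeffs3 \<Rightarrow> coeffs3" where
  "coeff_pd2 c i j l = real (Suc l) * c i j (Suc l)"

lemma poly3_collect_x0: "poly3 N c t b d = (\<Sum>i<N. (\<Sum>j<N. \<Sum>l<N. c i j l * b ^ j * d ^ l) * t ^ i)"
  unfolding poly3_def by (simp add: sum_distrib_left sum_distrib_right mult_ac)

lemma poly3_collect_x1: "poly3 N c a t d = (\<Sum>j<N. (\<Sum>i<N. \<Sum>l<N. c i j l * a ^ i * d ^ l) * t ^ j)"
  unfolding poly3_def by (subst sum.swap) (simp add: sum_distrib_left sum_distrib_right mult_ac)

lemma poly3_collect_x2: "poly3 N c a b t = (\<Sum>l<N. (\<Sum>i<N. \<Sum>j<N. c i j l * a ^ i * b ^ j) * t ^ l)"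
proof -
  have "poly3 N c a b t = (\<Sum>l<N. \<Sum>i<N. \<Sum>j<N. c i j l * a ^ i * b ^ j * t ^ l)"
    unfolding poly3_def by (subst sum.swap, subst (2) sum.swap) simp
  then show ?thesis by (simp add: sum_distrib_left sum_distrib_right mult_ac)
qed

lemma deriv_poly3_x0:
  assumes "coeffs_below N c"
  shows "deriv (\<lambda>t. poly3 N c t b d) a = poly3 N (coeff_pd0 c) a b d"
  unfolding poly3_collect_x0
  by (subst deriv_power_sum) (use assms in \<open>auto simp: coeffs_below_def coeff_pd0_def sum_distrib_left mult_ac\<close>)

lemma deriv_poly3_x1:
  assumes "coeffs_below N c"
  shows "deriv (\<lambda>t. poly3 N c a t d) b = poly3 N (coeff_pd1 c) a b d"
  unfolding poly3_collect_x1
  by (subst deriv_power_sum) (use assms in \<open>auto simp: coeffs_below_def coeff_pd1_def sum_distrib_left mult_ac\<close>)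

lemma deriv_poly3_x2:
  assumes "coeffs_below N c"
  shows "deriv (\<lambda>t. poly3 N c a b t) d = poly3 N (coeff_pd2 c) a b d"
  unfolding poly3_collect_x2
  by (subst deriv_power_sum) (use assms in \<open>auto simp: coeffs_below_def coeff_pd2_def sum_distrib_left mult_ac\<close>)

lemma poly3_eq_0_imp_coeffs_eq_0:
  assumes "coeffs_below N c" and "\<And>a b d. poly3 N c a b d = 0"
  shows "c = 0"
proof -
  have "c i j l = 0" for i j l
  proof (cases "i < N \<and> j < N \<and> l < N")
    case False
    then show ?thesis using assms(1) by (auto simp: coeffs_below_def)
  next
    case True
    have sum_jl: "(\<Sum>j<N. \<Sum>l<N. c i j l * b ^ j * d ^ l) = 0" for b d
      using power_sum_eq_0_imp_coeff_eq_0
          [where N = N and C = "\<lambda>i. \<Sum>j<N. \<Sum>l<N. c i j l * b ^ j * d ^ l" and i = i]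
        assms(2) True by (simp add: poly3_collect_x0)
    have "(\<Sum>j<N. (\<Sum>l<N. c i j l * d ^ l) * b ^ j) = 0" for b d
      using sum_jl[of b d] by (simp add: sum_distrib_left sum_distrib_right mult_ac)
    then have sum_l: "(\<Sum>l<N. c i j l * d ^ l) = 0" for d
      using power_sum_eq_0_imp_coeff_eq_0[where N = N and C = "\<lambda>j. \<Sum>l<N. c i j l * d ^ l" and i = j] True
      by blast
    show ?thesis
      using power_sum_eq_0_imp_coeff_eq_0[where N = N and C = "c i j" and i = l] sum_l True by blast
  qed
  then show ?thesis by (simp add: fun_eq_iff)
qed

lemma poly3_add: "poly3 N (\<lambda>i j l. c i j l + c' i j l) a b d = poly3 N c a b d + poly3 N c' a b d"
  unfolding poly3_def by (simp add: algebra_simps sum.distrib)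

lemma poly3_diff: "poly3 N (\<lambda>i j l. c i j l - c' i j l) a b d = poly3 N c a b d - poly3 N c' a b d"
  unfolding poly3_def by (simp add: algebra_simps sum_subtractf)

lemma poly3_scale: "poly3 N (\<lambda>i j l. r * c i j l) a b d = r * poly3 N c a b d"
  unfolding poly3_def by (simp add: sum_distrib_left mult_ac)

lemma poly3_zero [simp]: "poly3 N 0 a b d = 0"
  unfolding poly3_def by simp

lemma poly3_inject:
  assumes "coeffs_below N c" "coeffs_below N c'" "\<And>a b d. poly3 N c a b d = poly3 N c' a b d"
  shows "c = c'"
proof -
  have "(\<lambda>i j l. c i j l - c' i j l) = 0"
    using assms by (intro poly3_eq_0_imp_coeffs_eq_0[where N = N]) (auto simp: coeffs_below_def poly3_diff)
  then show ?thesis by (auto simp: fun_eq_iff)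
qed

text \<open>Component s of a coefficient array belongs to e_s, where e_0 = 1 and e_3 = e_1 e_2.\<close>
type_synonym qcoeffs = "nat \<Rightarrow> coeffs3"

definition qpoly :: "nat \<Rightarrow> qcoeffs \<Rightarrow> pt \<Rightarrow> quat" where
  "qpoly N c x = (case x of (a, b, d) \<Rightarrow>
     Q (poly3 N (c 0) a b d) (poly3 N (c 1) a b d) (poly3 N (c 2) a b d) (poly3 N (c 3) a b d))"

lemma qpoly_apply [simp]:
  "qpoly N c (a, b, d) = Q (poly3 N (c 0) a b d) (poly3 N (c 1) a b d) (poly3 N (c 2) a b d) (poly3 N (c 3) a b d)"
  by (simp add: qpoly_def)

lemma qpoly_zero [simp]: "qpoly N 0 = 0"
  by (simp add: fun_eq_iff zero_quat_def)

lemma pd0_qpoly: "(\<And>s. coeffs_below N (c s)) \<Longrightarrow> pd0 (qpoly N c) = qpoly N (\<lambda>s. coeff_pd0 (c s))"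
  by (simp add: fun_eq_iff pd0_def qderiv_def deriv_poly3_x0)

lemma pd1_qpoly: "(\<And>s. coeffs_below N (c s)) \<Longrightarrow> pd1 (qpoly N c) = qpoly N (\<lambda>s. coeff_pd1 (c s))"
  by (simp add: fun_eq_iff pd1_def qderiv_def deriv_poly3_x1)

lemma pd2_qpoly: "(\<And>s. coeffs_below N (c s)) \<Longrightarrow> pd2 (qpoly N c) = qpoly N (\<lambda>s. coeff_pd2 (c s))"
  by (simp add: fun_eq_iff pd2_def qderiv_def deriv_poly3_x2)

lemma qpoly_inject:
  assumes "\<And>s. coeffs_below N (c s)" "\<And>s. coeffs_below N (c' s)" "qpoly N c = qpoly N c'" "s < 4"
  shows "c s = c' s"
proof (rule poly3_inject[where N = N])
  fix a b d
  have "s = 0 \<or> s = 1 \<or> s = 2 \<or> s = 3" using \<open>s < 4\<close> by auto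
  then show "poly3 N (c s) a b d = poly3 N (c' s) a b d"
    using fun_cong[OF assms(3), of "(a, b, d)"] by auto
qed (use assms in auto)

lemma qpoly_sum:
  assumes "finite X"
  shows "qpoly N (\<lambda>s i j l. \<Sum>x\<in>X. u x * c x s i j l) = (\<Sum>x\<in>X. fscale (u x) (qpoly N (c x)))"
  using assms
proof (induction X rule: finite_induct)
  case empty
  then show ?case by (simp flip: zero_fun_def)
next
  case (insert x X)
  have "qpoly N (\<lambda>s i j l. \<Sum>y\<in>insert x X. u y * c y s i j l)
      = qpoly N (\<lambda>s i j l. u x * c x s i j l + (\<Sum>y\<in>X. u y * c y s i j l))"
    using insert by simp
  also have "\<dots> = fscale (u x) (qpoly N (c x)) + qpoly N (\<lambda>s i j l. \<Sum>y\<in>X. u y * c y s i j l)"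
    by (simp add: fun_eq_iff qpoly_def poly3_add poly3_scale fscale_def qscale_def plus_quat_def qadd_def
        split: prod.splits)
  finally show ?case using insert by simp
qed

definition coeff_dbar_right :: "qcoeffs \<Rightarrow> qcoeffs" where
  "coeff_dbar_right c s =
    (if s = 0 then (\<lambda>i j l. coeff_pd0 (c 0) i j l - coeff_pd1 (c 1) i j l - coeff_pd2 (c 2) i j l)
     else if s = 1 then (\<lambda>i j l. coeff_pd0 (c 1) i j l + coeff_pd1 (c 0) i j l - coeff_pd2 (c 3) i j l)
     else if s = 2 then (\<lambda>i j l. coeff_pd0 (c 2) i j l + coeff_pd1 (c 3) i j l + coeff_pd2 (c 0) i j l)
     else if s = 3 then (\<lambda>i j l. coeff_pd0 (c 3) i j l - coeff_pd1 (c 2) i j l + coeff_pd2 (c 1) i j l)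
     else 0)"

definition coeff_dbar_left :: "qcoeffs \<Rightarrow> qcoeffs" where
  "coeff_dbar_left c s =
    (if s = 0 then (\<lambda>i j l. coeff_pd0 (c 0) i j l - coeff_pd1 (c 1) i j l - coeff_pd2 (c 2) i j l)
     else if s = 1 then (\<lambda>i j l. coeff_pd0 (c 1) i j l + coeff_pd1 (c 0) i j l + coeff_pd2 (c 3) i j l)
     else if s = 2 then (\<lambda>i j l. coeff_pd0 (c 2) i j l - coeff_pd1 (c 3) i j l + coeff_pd2 (c 0) i j l)
     else if s = 3 then (\<lambda>i j l. coeff_pd0 (c 3) i j l + coeff_pd1 (c 2) i j l - coeff_pd2 (c 1) i j l)
     else 0)"

lemma coeffs_below_coeff_dbar_right: "(\<And>s. coeffs_below N (c s)) \<Longrightarrow> coeffs_below N (coeff_dbar_right c s)"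
  unfolding coeffs_below_def coeff_dbar_right_def coeff_pd0_def coeff_pd1_def coeff_pd2_def
  by (auto split: if_splits)

lemma dbar_right_qpoly:
  "(\<And>s. coeffs_below N (c s)) \<Longrightarrow> dbar_right (qpoly N c) = qpoly N (coeff_dbar_right c)"
  by (simp add: fun_eq_iff dbar_right_def pd0_qpoly pd1_qpoly pd2_qpoly qadd_def qmul_def qe1_def qe2_def
      coeff_dbar_right_def poly3_add poly3_diff)

lemma dbar_left_qpoly:
  "(\<And>s. coeffs_below N (c s)) \<Longrightarrow> dbar_left (qpoly N c) = qpoly N (coeff_dbar_left c)"
  by (simp add: fun_eq_iff dbar_left_def pd0_qpoly pd1_qpoly pd2_qpoly qadd_def qmul_def qe1_def qe2_def
      coeff_dbar_left_def poly3_add poly3_diff)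

type_synonym qlayer = "nat \<Rightarrow> nat \<Rightarrow> nat \<Rightarrow> real"

definition layer :: "qcoeffs \<Rightarrow> nat \<Rightarrow> qlayer" where
  "layer c i = (\<lambda>s j l. c s i j l)"

text \<open>
  In layer i, the term d0^2 f of dbar (f dbar) contributes (i+1)(i+2) times layer i + 2 of f,
  and all other terms involve only layers i and i + 1 of f. Component s < 3 of the equation thus
  reads (i+1)(i+2) c s (i+2) = cauchy_rhs i (layer c i) (layer c (i+1)) s.
\<close>
definition cauchy_rhs :: "nat \<Rightarrow> qlayer \<Rightarrow> qlayer \<Rightarrow> qlayer" where
  "cauchy_rhs i P W s j l =
    (if s = 0 then
       real (Suc j) * real (Suc (Suc j)) * P 0 (Suc (Suc j)) l
     + real (Suc l) * real (Suc (Suc l)) * P 0 j (Suc (Suc l))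
     + 2 * real (Suc i) * real (Suc j) * W 1 (Suc j) l
     + 2 * real (Suc i) * real (Suc l) * W 2 j (Suc l)
     else if s = 1 then
     - 2 * real (Suc i) * real (Suc j) * W 0 (Suc j) l
     + real (Suc j) * real (Suc (Suc j)) * P 1 (Suc (Suc j)) l
     - real (Suc l) * real (Suc (Suc l)) * P 1 j (Suc (Suc l))
     + 2 * real (Suc j) * real (Suc l) * P 2 (Suc j) (Suc l)
     else if s = 2 then
     - 2 * real (Suc i) * real (Suc l) * W 0 j (Suc l)
     + 2 * real (Suc j) * real (Suc l) * P 1 (Suc j) (Suc l)
     - real (Suc j) * real (Suc (Suc j)) * P 2 (Suc (Suc j)) l
     + real (Suc l) * real (Suc (Suc l)) * P 2 j (Suc (Suc l))
     else 0)"

definition infr_defect :: "qcoeffs \<Rightarrow> qcoeffs" where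
  "infr_defect c s i j l =
    (if s < 3 then real (Suc i) * real (Suc (Suc i)) * c s (Suc (Suc i)) j l
                   - cauchy_rhs i (layer c i) (layer c (Suc i)) s j l
     else 0)"

lemma coeff_dbar_left_right:
  assumes "c 3 = 0"
  shows "coeff_dbar_left (coeff_dbar_right c) = infr_defect c"
proof (intro ext)
  fix s i j l :: nat
  have "s = 0 \<or> s = 1 \<or> s = 2 \<or> s = 3 \<or> 3 < s" by auto
  then show "coeff_dbar_left (coeff_dbar_right c) s i j l = infr_defect c s i j l"
    using assms
    by (elim disjE) (simp_all add: coeff_dbar_left_def coeff_dbar_right_def infr_defect_def cauchy_rhs_def
        layer_def coeff_pd0_def coeff_pd1_def coeff_pd2_def algebra_simps)
qed

lemma coeffs_below_infr_defect: "(\<And>s. coeffs_below N (c s)) \<Longrightarrow> coeffs_below N (infr_defect c s)"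
  unfolding coeffs_below_def infr_defect_def cauchy_rhs_def layer_def by auto

lemma dbar_left_right_qpoly:
  assumes "\<And>s. coeffs_below N (c s)" and "c 3 = 0"
  shows "dbar_left (dbar_right (qpoly N c)) = qpoly N (infr_defect c)"
  using assms
  by (simp add: dbar_right_qpoly dbar_left_qpoly coeffs_below_coeff_dbar_right coeff_dbar_left_right)

lemma qpoly_inframonogenic_iff:
  assumes "\<And>s. coeffs_below N (c s)" and "c 3 = 0"
  shows "(\<forall>x. dbar_left (dbar_right (qpoly N c)) x = Q 0 0 0 0) \<longleftrightarrow> infr_defect c = 0"
proof -
  have "(\<forall>x. dbar_left (dbar_right (qpoly N c)) x = Q 0 0 0 0) \<longleftrightarrow> qpoly N (infr_defect c) = qpoly N 0"
    by (simp add: dbar_left_right_qpoly[of N c, OF assms] fun_eq_iff zero_quat_def)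
  also have "\<dots> \<longleftrightarrow> infr_defect c = 0"
  proof
    assume eq: "qpoly N (infr_defect c) = qpoly N 0"
    have "infr_defect c s = 0 s" for s
    proof (cases "s < 4")
      case True
      then show ?thesis
        using qpoly_inject[OF coeffs_below_infr_defect[OF assms(1)] _ eq] by (simp add: coeffs_below_def)
    next
      case False
      then show ?thesis by (simp add: fun_eq_iff infr_defect_def)
    qed
    then show "infr_defect c = 0" by blast
  qed simp
  finally show ?thesis .
qed

definition homogeneous_coeffs :: "nat \<Rightarrow> coeffs3 \<Rightarrow> bool" where
  "homogeneous_coeffs n c \<longleftrightarrow> (\<forall>i j l. c i j l \<noteq> 0 \<longrightarrow> i + j + l = n)"

lemma homogeneous_coeffs_below: "homogeneous_coeffs n c \<Longrightarrow> coeffs_below (Suc n) c"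
  unfolding homogeneous_coeffs_def coeffs_below_def by force

lemma poly3_homogeneous:
  assumes "homogeneous_coeffs n c"
  shows "poly3 (Suc n) c a b d = (\<Sum>i\<le>n. \<Sum>j\<le>n - i. c i j (n - i - j) * a ^ i * b ^ j * d ^ (n - i - j))"
proof -
  have sum_l: "(\<Sum>l<Suc n. c i j l * a ^ i * b ^ j * d ^ l) =
      (if i + j \<le> n then c i j (n - i - j) * a ^ i * b ^ j * d ^ (n - i - j) else 0)" for i j
  proof -
    have zero: "c i j l = 0" if "\<not> (l = n - i - j \<and> i + j \<le> n)" for l
      using assms that unfolding homogeneous_coeffs_def by force
    have "(\<Sum>l<Suc n. c i j l * a ^ i * b ^ j * d ^ l) =
        (\<Sum>l<Suc n. if l = n - i - j \<and> i + j \<le> n then c i j l * a ^ i * b ^ j * d ^ l else 0)"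
      using zero by (intro sum.cong) auto
    also have "\<dots> = (if i + j \<le> n then c i j (n - i - j) * a ^ i * b ^ j * d ^ (n - i - j) else 0)"
      by (cases "i + j \<le> n") (auto simp: sum.delta)
    finally show ?thesis .
  qed
  have sum_j: "(\<Sum>j\<le>n. if i + j \<le> n then g j else 0) = (\<Sum>j\<le>n - i. g j)"
    if "i \<le> n" for i and g :: "nat \<Rightarrow> real"
  proof -
    have "(\<Sum>j\<le>n. if i + j \<le> n then g j else 0) = sum g {j \<in> {..n}. i + j \<le> n}"
      by (rule sum.inter_filter[symmetric]) simp
    also have "{j \<in> {..n}. i + j \<le> n} = {..n - i}" using that by auto
    finally show ?thesis .
  qed
  show ?thesis
    unfolding poly3_def lessThan_Suc_atMost[symmetric] sum_l
    by (simp add: lessThan_Suc_atMost sum_j)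
qed

lemma hom_poly_iff_poly3:
  "hom_poly n p \<longleftrightarrow> (\<exists>c. homogeneous_coeffs n c \<and> (\<forall>a b d. p (a, b, d) = poly3 (Suc n) c a b d))"
proof
  assume "hom_poly n p"
  then obtain c' where c': "\<And>a b d. p (a, b, d) = (\<Sum>i\<le>n. \<Sum>j\<le>n - i. c' i j * a ^ i * b ^ j * d ^ (n - i - j))"
    unfolding hom_poly_def by blast
  define c where "c i j l = (if i + j + l = n then c' i j else 0)" for i j l
  have hom: "homogeneous_coeffs n c" unfolding homogeneous_coeffs_def c_def by auto
  have "p (a, b, d) = poly3 (Suc n) c a b d" for a b d
    unfolding poly3_homogeneous[OF hom] c' by (intro sum.cong refl) (auto simp: c_def)
  with hom show "\<exists>c. homogeneous_coeffs n c \<and> (\<forall>a b d. p (a, b, d) = poly3 (Suc n) c a b d)" by blast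
next
  assume "\<exists>c. homogeneous_coeffs n c \<and> (\<forall>a b d. p (a, b, d) = poly3 (Suc n) c a b d)"
  then show "hom_poly n p"
    unfolding hom_poly_def by (auto simp: poly3_homogeneous)
qed

definition reduced_homogeneous :: "nat \<Rightarrow> qcoeffs \<Rightarrow> bool" where
  "reduced_homogeneous n c \<longleftrightarrow> (\<forall>s i j l. c s i j l \<noteq> 0 \<longrightarrow> s < 3 \<and> i + j + l = n)"

lemma reduced_homogeneousD:
  assumes "reduced_homogeneous n c"
  shows "homogeneous_coeffs n (c s)" and "coeffs_below (Suc n) (c s)" and "3 \<le> s \<Longrightarrow> c s = 0"
proof -
  show hom: "homogeneous_coeffs n (c s)"
    using assms unfolding reduced_homogeneous_def homogeneous_coeffs_def by blast
  then show "coeffs_below (Suc n) (c s)" by (rule homogeneous_coeffs_below)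
  show "3 \<le> s \<Longrightarrow> c s = 0"
    using assms unfolding reduced_homogeneous_def by fastforce
qed

lemma Infr_eq: "Infr n = qpoly (Suc n) ` {c. reduced_homogeneous n c \<and> infr_defect c = 0}"
proof (intro equalityI subsetI)
  fix f assume "f \<in> Infr n"
  then have f3: "\<And>x. q3 (f x) = 0" and pde: "\<forall>x. dbar_left (dbar_right f) x = Q 0 0 0 0"
    and "hom_poly n (\<lambda>x. q0 (f x))" "hom_poly n (\<lambda>x. q1 (f x))" "hom_poly n (\<lambda>x. q2 (f x))"
    unfolding Infr_def by auto
  then obtain c0 c1 c2 where
    c0: "homogeneous_coeffs n c0" "\<And>a b d. q0 (f (a, b, d)) = poly3 (Suc n) c0 a b d" and
    c1: "homogeneous_coeffs n c1" "\<And>a b d. q1 (f (a, b, d)) = poly3 (Suc n) c1 a b d" and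
    c2: "homogeneous_coeffs n c2" "\<And>a b d. q2 (f (a, b, d)) = poly3 (Suc n) c2 a b d"
    unfolding hom_poly_iff_poly3 by blast
  define c :: qcoeffs where "c s = (if s = 0 then c0 else if s = 1 then c1 else if s = 2 then c2 else 0)" for s
  have red: "reduced_homogeneous n c"
    using c0(1) c1(1) c2(1) by (auto simp: reduced_homogeneous_def homogeneous_coeffs_def c_def)
  have f_eq: "f = qpoly (Suc n) c"
    by (auto simp: fun_eq_iff c_def c0 c1 c2 f3 intro: quat.expand)
  have "infr_defect c = 0"
    using pde qpoly_inframonogenic_iff[of "Suc n" c] reduced_homogeneousD[OF red] unfolding f_eq by simp
  with red f_eq show "f \<in> qpoly (Suc n) ` {c. reduced_homogeneous n c \<and> infr_defect c = 0}" by blast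
next
  fix f assume "f \<in> qpoly (Suc n) ` {c. reduced_homogeneous n c \<and> infr_defect c = 0}"
  then obtain c where red: "reduced_homogeneous n c" and "infr_defect c = 0" and f_eq: "f = qpoly (Suc n) c"
    by blast
  then have "\<forall>x. dbar_left (dbar_right f) x = Q 0 0 0 0"
    using qpoly_inframonogenic_iff[of "Suc n" c] reduced_homogeneousD[OF red] by simp
  moreover have "hom_poly n (\<lambda>x. q0 (f x))" "hom_poly n (\<lambda>x. q1 (f x))" "hom_poly n (\<lambda>x. q2 (f x))"
    unfolding hom_poly_iff_poly3 f_eq using reduced_homogeneousD(1)[OF red] by auto
  moreover have "\<forall>x. q3 (f x) = 0"
    by (auto simp: f_eq qpoly_def reduced_homogeneousD(3)[OF red] split: prod.splits)
  ultimately show "f \<in> Infr n" unfolding Infr_def by blast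
qed

fun cauchy_layer :: "qcoeffs \<Rightarrow> nat \<Rightarrow> qlayer" where
  "cauchy_layer c 0 = layer c 0"
| "cauchy_layer c (Suc 0) = layer c 1"
| "cauchy_layer c (Suc (Suc i)) =
    (\<lambda>s j l. cauchy_rhs i (cauchy_layer c i) (cauchy_layer c (Suc i)) s j l
                / (real (Suc i) * real (Suc (Suc i))))"

definition cauchy_extension :: "qcoeffs \<Rightarrow> qcoeffs" where
  "cauchy_extension c s i j l = cauchy_layer c i s j l"

lemma layer_cauchy_extension [simp]: "layer (cauchy_extension c) i = cauchy_layer c i"
  by (simp add: layer_def cauchy_extension_def)

lemma infr_defect_cauchy_extension: "infr_defect (cauchy_extension c) = 0"
  by (simp add: fun_eq_iff infr_defect_def cauchy_extension_def)

lemma cauchy_extension_cong: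
  assumes "layer c 0 = layer c' 0" and "layer c 1 = layer c' 1"
  shows "cauchy_extension c = cauchy_extension c'"
proof -
  have "cauchy_layer c i = cauchy_layer c' i" for i
    by (induction i rule: induct_nat_012) (simp_all add: assms[unfolded One_nat_def])
  then show ?thesis by (simp add: fun_eq_iff cauchy_extension_def)
qed

lemma cauchy_extension_self:
  assumes "infr_defect c = 0" and "\<And>s. 3 \<le> s \<Longrightarrow> c s = 0"
  shows "cauchy_extension c = c"
proof -
  have "cauchy_layer c i = layer c i" for i
  proof (induction i rule: induct_nat_012)
    case (ge2 i)
    have "cauchy_layer c (Suc (Suc i)) s j l = c s (Suc (Suc i)) j l" for s j l
    proof (cases "s < 3")
      case True
      have "infr_defect c s i j l = 0" using assms(1) by simp
      then have "cauchy_rhs i (layer c i) (layer c (Suc i)) s j l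
          = real (Suc i) * real (Suc (Suc i)) * c s (Suc (Suc i)) j l"
        using True by (simp add: infr_defect_def)
      then show ?thesis using ge2 by (simp del: of_nat_Suc)
    next
      case False
      then show ?thesis using assms(2)[of s] by (simp add: cauchy_rhs_def)
    qed
    then show ?case by (simp add: fun_eq_iff layer_def)
  qed (simp_all add: layer_def)
  then show ?thesis by (simp add: fun_eq_iff cauchy_extension_def layer_def)
qed

lemma cauchy_rhs_eq_0:
  assumes "\<And>s j l. i + j + l \<noteq> n \<Longrightarrow> P s j l = 0" and "\<And>s j l. Suc i + j + l \<noteq> n \<Longrightarrow> W s j l = 0"
    and "\<not> (s < 3 \<and> Suc (Suc i) + j + l = n)"
  shows "cauchy_rhs i P W s j l = 0"
  using assms by (auto simp: cauchy_rhs_def)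

lemma reduced_homogeneous_cauchy_extension:
  assumes "reduced_homogeneous n c"
  shows "reduced_homogeneous n (cauchy_extension c)"
proof -
  have "cauchy_layer c i s j l = 0" if "\<not> (s < 3 \<and> i + j + l = n)" for i s j l
    using that
  proof (induction i arbitrary: s j l rule: induct_nat_012)
    case (ge2 i)
    have "cauchy_rhs i (cauchy_layer c i) (cauchy_layer c (Suc i)) s j l = 0"
      by (rule cauchy_rhs_eq_0) (use ge2 in auto)
    then show ?case by simp
  qed (use assms in \<open>fastforce simp: reduced_homogeneous_def layer_def\<close>)+
  then show ?thesis by (auto simp: reduced_homogeneous_def cauchy_extension_def)
qed

lemma infr_defect_linear:
  "infr_defect (\<lambda>s i j l. r * c s i j l + c' s i j l)
    = (\<lambda>s i j l. r * infr_defect c s i j l + infr_defect c' s i j l)"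
  by (simp add: fun_eq_iff infr_defect_def cauchy_rhs_def layer_def algebra_simps)

lemma infr_defect_sum:
  assumes "finite X"
  shows "infr_defect (\<lambda>s i j l. \<Sum>x\<in>X. u x * c x s i j l)
    = (\<lambda>s i j l. \<Sum>x\<in>X. u x * infr_defect (c x) s i j l)"
  using assms
proof (induction X rule: finite_induct)
  case empty
  then show ?case by (simp add: fun_eq_iff infr_defect_def cauchy_rhs_def layer_def)
next
  case (insert x X)
  then show ?case using infr_defect_linear[of "u x" "c x" "\<lambda>s i j l. \<Sum>x\<in>X. u x * c x s i j l"] by simp
qed

interpretation qfun: vector_space fscale
  by unfold_locales (auto simp: fun_eq_iff fscale_def qscale_def plus_quat_def qadd_def algebra_simps)

text \<open>The index (s, t, j) stands for the Cauchy datum e_s x0^t x1^j x2^(n-t-j).\<close>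
definition cauchy_index :: "nat \<Rightarrow> (nat \<times> nat \<times> nat) set" where
  "cauchy_index n = {(s, t, j). s < 3 \<and> t < 2 \<and> t + j \<le> n}"

lemma cauchy_index_eq: "cauchy_index n = {..<3} \<times> ({0} \<times> {..n} \<union> {1} \<times> {..<n})"
  by (auto simp: cauchy_index_def less_2_cases_iff)

lemma finite_cauchy_index: "finite (cauchy_index n)"
  by (simp add: cauchy_index_eq)

lemma card_cauchy_index: "card (cauchy_index n) = 6 * n + 3"
proof -
  have "card ({0::nat} \<times> {..n} \<union> {1} \<times> {..<n}) = card ({0::nat} \<times> {..n}) + card ({1::nat} \<times> {..<n})"
    by (rule card_Un_disjoint) auto
  then show ?thesis by (simp add: cauchy_index_eq card_cartesian_product)
qed

text \<open>Only layers 0 and 1 of unit_coeffs matter, since cauchy_extension reads no others.\<close>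
definition unit_coeffs :: "nat \<Rightarrow> nat \<times> nat \<times> nat \<Rightarrow> qcoeffs" where
  "unit_coeffs n x s i j l = (if x = (s, i, j) \<and> i + j + l = n then 1 else 0)"

definition basis_coeffs :: "nat \<Rightarrow> nat \<times> nat \<times> nat \<Rightarrow> qcoeffs" where
  "basis_coeffs n x = cauchy_extension (unit_coeffs n x)"

definition infr_basis :: "nat \<Rightarrow> nat \<times> nat \<times> nat \<Rightarrow> pt \<Rightarrow> quat" where
  "infr_basis n x = qpoly (Suc n) (basis_coeffs n x)"

lemma basis_coeffs_initial: "t < 2 \<Longrightarrow> basis_coeffs n x s t j l = unit_coeffs n x s t j l"
  by (auto simp: basis_coeffs_def cauchy_extension_def layer_def less_2_cases_iff)

lemma reduced_homogeneous_basis_coeffs: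
  assumes "x \<in> cauchy_index n"
  shows "reduced_homogeneous n (basis_coeffs n x)"
  unfolding basis_coeffs_def
  by (rule reduced_homogeneous_cauchy_extension)
    (use assms in \<open>auto simp: reduced_homogeneous_def unit_coeffs_def cauchy_index_def split: if_splits\<close>)

lemma infr_basis_in_Infr:
  assumes "x \<in> cauchy_index n"
  shows "infr_basis n x \<in> Infr n"
  unfolding Infr_eq infr_basis_def using reduced_homogeneous_basis_coeffs[OF assms]
  by (intro imageI) (simp add: basis_coeffs_def infr_defect_cauchy_extension)

lemma sum_unit_coeffs:
  "(\<Sum>x\<in>cauchy_index n. u x * unit_coeffs n x s i j l) =
    (if (s, i, j) \<in> cauchy_index n \<and> i + j + l = n then u (s, i, j) else 0)"
proof -
  have "(\<Sum>x\<in>cauchy_index n. u x * unit_coeffs n x s i j l) =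
      (\<Sum>x\<in>cauchy_index n. if x = (s, i, j) then (if i + j + l = n then u x else 0) else 0)"
    by (intro sum.cong) (auto simp: unit_coeffs_def)
  then show ?thesis by (simp add: finite_cauchy_index)
qed

lemma basis_coeffs_coordinate:
  assumes "(s, t, j) \<in> cauchy_index n" and "t + j + l = n"
  shows "basis_coeffs n x s t j l = (if x = (s, t, j) then 1 else 0)"
  using assms by (auto simp: basis_coeffs_initial unit_coeffs_def cauchy_index_def)

lemma sum_basis_coeffs_coordinate:
  assumes "(s, t, j) \<in> cauchy_index n" and "t + j + l = n"
  shows "(\<Sum>x\<in>cauchy_index n. u x * basis_coeffs n x s t j l) = u (s, t, j)"
  using assms by (simp add: basis_coeffs_coordinate finite_cauchy_index if_distrib cong: if_cong)

lemma inj_on_infr_basis: "inj_on (infr_basis n) (cauchy_index n)"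
proof (rule inj_onI)
  fix x y assume x: "x \<in> cauchy_index n" and y: "y \<in> cauchy_index n" and eq: "infr_basis n x = infr_basis n y"
  obtain s t j where y_eq: "y = (s, t, j)" by (metis prod_cases3)
  have "basis_coeffs n x s = basis_coeffs n y s"
    by (rule qpoly_inject[where N = "Suc n"])
      (use eq x y y_eq reduced_homogeneousD(2)[OF reduced_homogeneous_basis_coeffs] in
        \<open>auto simp: infr_basis_def cauchy_index_def\<close>)
  moreover have "t + j + (n - t - j) = n" using y by (simp add: y_eq cauchy_index_def)
  ultimately show "x = y"
    using basis_coeffs_coordinate[of s t j n "n - t - j"] y by (metis y_eq zero_neq_one)
qed

lemma independent_infr_basis: "qfun.independent (infr_basis n ` cauchy_index n)"
proof (rule qfun.independent_if_scalars_zero)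
  show "finite (infr_basis n ` cauchy_index n)" by (simp add: finite_cauchy_index)
next
  fix u v
  assume sum0: "(\<Sum>v\<in>infr_basis n ` cauchy_index n. fscale (u v) v) = 0"
    and "v \<in> infr_basis n ` cauchy_index n"
  then obtain s t j where idx: "(s, t, j) \<in> cauchy_index n" and v: "v = infr_basis n (s, t, j)" by auto
  define w where "w s' i j l = (\<Sum>x\<in>cauchy_index n. u (infr_basis n x) * basis_coeffs n x s' i j l)" for s' i j l
  have below: "coeffs_below (Suc n) (w s')" for s'
    using reduced_homogeneousD(2)[OF reduced_homogeneous_basis_coeffs] by (simp add: coeffs_below_def w_def)
  have "(\<Sum>x\<in>cauchy_index n. fscale (u (infr_basis n x)) (infr_basis n x)) = 0"
    using sum0 by (simp add: sum.reindex[OF inj_on_infr_basis])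
  then have w0: "qpoly (Suc n) w = qpoly (Suc n) 0"
    unfolding w_def infr_basis_def by (simp add: qpoly_sum finite_cauchy_index)
  have "w s = 0 s"
    using qpoly_inject[OF below _ w0, of s] idx by (auto simp: coeffs_below_def cauchy_index_def)
  moreover have "t + j + (n - t - j) = n" using idx by (simp add: cauchy_index_def)
  ultimately show "u v = 0"
    using sum_basis_coeffs_coordinate[OF idx, of "n - t - j" "\<lambda>x. u (infr_basis n x)"]
    by (simp add: v w_def fun_eq_iff)
qed

lemma reduced_solution_eq_sum_basis_coeffs:
  assumes red: "reduced_homogeneous n c" and sol: "infr_defect c = 0"
  defines "coord \<equiv> \<lambda>(s, t, j). c s t j (n - t - j)"
  shows "c = (\<lambda>s i j l. \<Sum>x\<in>cauchy_index n. coord x * basis_coeffs n x s i j l)"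
    (is "c = ?c'")
proof -
  have "infr_defect ?c' = 0"
    by (simp add: infr_defect_sum finite_cauchy_index basis_coeffs_def infr_defect_cauchy_extension)
      (simp add: zero_fun_def)
  moreover have "?c' s = 0" if "3 \<le> s" for s
    using that reduced_homogeneousD(3)[OF reduced_homogeneous_basis_coeffs] by (simp add: fun_eq_iff)
  ultimately have "?c' = cauchy_extension ?c'" by (simp add: cauchy_extension_self)
  also have "cauchy_extension ?c' = cauchy_extension c"
  proof (rule cauchy_extension_cong)
    have "?c' s t j l = c s t j l" if "t < 2" for s t j l
    proof -
      have "?c' s t j l = (if (s, t, j) \<in> cauchy_index n \<and> t + j + l = n then coord (s, t, j) else 0)"
        using that by (simp add: basis_coeffs_initial sum_unit_coeffs)
      also have "\<dots> = c s t j l"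
        using red that unfolding reduced_homogeneous_def coord_def cauchy_index_def by force
      finally show ?thesis .
    qed
    then show "layer ?c' 0 = layer c 0" "layer ?c' 1 = layer c 1" by (simp_all add: layer_def)
  qed
  also have "\<dots> = c" using sol reduced_homogeneousD(3)[OF red] by (rule cauchy_extension_self)
  finally show ?thesis ..
qed

lemma Infr_subset_span: "Infr n \<subseteq> qfun.span (infr_basis n ` cauchy_index n)"
proof
  fix f assume "f \<in> Infr n"
  then obtain c where red: "reduced_homogeneous n c" and sol: "infr_defect c = 0" and f: "f = qpoly (Suc n) c"
    unfolding Infr_eq by blast
  have "f = (\<Sum>x\<in>cauchy_index n. fscale ((\<lambda>(s, t, j). c s t j (n - t - j)) x) (infr_basis n x))"
    unfolding f infr_basis_def
    by (subst reduced_solution_eq_sum_basis_coeffs[OF red sol]) (rule qpoly_sum[OF finite_cauchy_index])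
  also have "\<dots> \<in> qfun.span (infr_basis n ` cauchy_index n)"
    by (intro qfun.span_sum qfun.span_scale qfun.span_base) auto
  finally show "f \<in> qfun.span (infr_basis n ` cauchy_index n)" .
qed

theorem theorem3p4:
  fixes n :: nat
  shows "vector_space.dim fscale (Infr n) = 6 * n + 3"
proof (rule qfun.dim_unique)
  show "infr_basis n ` cauchy_index n \<subseteq> Infr n" using infr_basis_in_Infr by blast
  show "Infr n \<subseteq> qfun.span (infr_basis n ` cauchy_index n)" by (rule Infr_subset_span)
  show "qfun.independent (infr_basis n ` cauchy_index n)" by (rule independent_infr_basis)
  show "card (infr_basis n ` cauchy_index n) = 6 * n + 3"
    by (simp add: card_image[OF inj_on_infr_basis] card_cauchy_index)
qed

end
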